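(* Let $\mathbb{M}^2$ be a normed plane and let $S$ be a finite set of points of $\mathbb{M}^2$ with all pairwise distances distinct. If $e$ is an edge of $\mathtt{MXST}(S)$, then at least one endpoint of $e$ lies on $\partial\mathrm{conv}(S)$.
   Context: $\mathbb{M}^2$ is $\mathbb{R}^2$ with an arbitrary norm $\|\cdot\|$. $\mathtt{MXST}(S)$ is the (unique) maximum spanning tree of the complete graph on $S$ in which the edge $\{p,q\}$ has weight $\|p-q\|$. $\partial\mathrm{conv}(S)$ is the boundary of the convex hull of $S$. *)

theory Defs
  imports "HOL-Analysis.Analysis"
begin

definition is_norm :: "(real^2 \<Rightarrow> real) \<Rightarrow> bool" where
  "is_norm N \<longleftrightarrow>
     (\<forall>x. N x = 0 \<longleftrightarrow> x = 0) \<and>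
     (\<forall>c x. N (c *\<^sub>R x) = \<bar>c\<bar> * N x) \<and>
     (\<forall>x y. N (x + y) \<le> N x + N y)"

definition complete_edges :: "'a set \<Rightarrow> 'a set set" where
  "complete_edges S = {{p, q} | p q. p \<in> S \<and> q \<in> S \<and> p \<noteq> q}"

definition is_spanning_tree :: "'a set \<Rightarrow> 'a set set \<Rightarrow> bool" where
  "is_spanning_tree S T \<longleftrightarrow>
     T \<subseteq> complete_edges S \<and>
     card T = card S - 1 \<and>
     (\<forall>p\<in>S. \<forall>q\<in>S. (p, q) \<in> {(u, v). {u, v} \<in> T}\<^sup>*)"

definition edge_weight :: "(real^2 \<Rightarrow> real) \<Rightarrow> (real^2) set \<Rightarrow> real" where
  "edge_weight N e = (THE w. \<exists>p q. e = {p, q} \<and> w = N (p - q))"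

definition is_max_spanning_tree ::
  "(real^2 \<Rightarrow> real) \<Rightarrow> (real^2) set \<Rightarrow> (real^2) set set \<Rightarrow> bool" where
  "is_max_spanning_tree N S T \<longleftrightarrow>
     is_spanning_tree S T \<and>
     (\<forall>T'. is_spanning_tree S T' \<longrightarrow>
        (\<Sum>e\<in>T'. edge_weight N e) \<le> (\<Sum>e\<in>T. edge_weight N e))"

end

theory Submission
  imports Defs
begin

text \<open>Let \<open>e = {p, q}\<close> be an edge of the maximum spanning tree \<open>T\<close>. Deleting \<open>e\<close> splits \<open>T\<close>
  into the component \<open>A\<close> of \<open>p\<close> and the rest, which contains \<open>q\<close>. Exchanging \<open>e\<close> for any edge
  \<open>{x, y}\<close> between \<open>A\<close> and its complement gives another spanning tree, so by maximality
  \<open>N (x - y) \<le> N (p - q)\<close> for every such pair.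

  Suppose \<open>p\<close> and \<open>q\<close> were both interior points of \<open>conv S\<close>. A linear functional \<open>u\<close> with
  \<open>u \<le> N\<close> and \<open>u (p - q) = N (p - q)\<close> exists by separating \<open>p - q\<close> from the open \<open>N\<close>-ball of
  radius \<open>N (p - q)\<close>. Interiority gives \<open>b \<in> S\<close> with \<open>u b > u p\<close> and \<open>a \<in> S\<close> with \<open>u a < u q\<close>.
  One of the pairs \<open>(b, q)\<close>, \<open>(p, a)\<close>, \<open>(a, b)\<close> crosses the cut, and \<open>u\<close> separates its endpoints
  by more than \<open>u (p - q) = N (p - q)\<close>, hence their \<open>N\<close>-distance exceeds \<open>N (p - q)\<close>: a
  contradiction.\<close>

definition adj :: "'a set set \<Rightarrow> ('a \<times> 'a) set" where
  "adj E = {(u, v). {u, v} \<in> E}"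

definition component :: "'a set set \<Rightarrow> 'a \<Rightarrow> 'a set" where
  "component E v = {x. (v, x) \<in> (adj E)\<^sup>*}"

lemma sym_adj: "sym (adj E)"
  unfolding adj_def sym_def by (auto simp: insert_commute)

lemma rtrancl_adj_sym: "(x, y) \<in> (adj E)\<^sup>* \<Longrightarrow> (y, x) \<in> (adj E)\<^sup>*"
  using sym_rtrancl[OF sym_adj] by (meson symD)

lemma rtrancl_adj_closed:
  assumes "(x, y) \<in> (adj E)\<^sup>*" "x \<in> S" "E \<subseteq> complete_edges S"
  shows "y \<in> S"
  using assms(1,2)
proof (induction rule: rtrancl_induct)
  case (step y z)
  then have "{y, z} \<in> complete_edges S"
    using assms(3) unfolding adj_def by auto
  then show ?case
    unfolding complete_edges_def by (auto simp: doubleton_eq_iff)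
qed

lemma finite_complete_edges: "finite S \<Longrightarrow> finite (complete_edges S)"
  by (rule finite_subset[of _ "Pow S"]) (auto simp: complete_edges_def)

lemma card_edges_ge_if_connected:
  assumes "finite S" and E: "E \<subseteq> complete_edges S" and "r \<in> S"
    and conn: "\<And>x. x \<in> S \<Longrightarrow> (x, r) \<in> (adj E)\<^sup>*"
  shows "card S - 1 \<le> card E"
proof -
  define hops where "hops x = (LEAST n. (x, r) \<in> adj E ^^ n)" for x
  have "\<exists>y. (x, y) \<in> adj E \<and> hops y < hops x" if x: "x \<in> S - {r}" for x
  proof -
    obtain n where "(x, r) \<in> adj E ^^ n"
      using conn x rtrancl_power by blast
    then have "(x, r) \<in> adj E ^^ hops x"
      unfolding hops_def by (rule LeastI)
    moreover have "hops x \<noteq> 0"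
      using calculation x by (metis DiffE insertI1 pair_in_Id_conv relpow.simps(1))
    ultimately obtain m y where "hops x = Suc m" "(x, y) \<in> adj E" "(y, r) \<in> adj E ^^ m"
      by (metis not0_implies_Suc relpow_Suc_D2)
    moreover have "hops y \<le> m"
      unfolding hops_def using calculation(3) by (rule Least_le)
    ultimately show ?thesis by auto
  qed
  then obtain next_hop where next_hop:
    "\<And>x. x \<in> S - {r} \<Longrightarrow> (x, next_hop x) \<in> adj E \<and> hops (next_hop x) < hops x"
    by metis
  \<comment> \<open>Two vertices sharing their first edge towards \<open>r\<close> would each be closer to \<open>r\<close> than the other.\<close>
  have "inj_on (\<lambda>x. {x, next_hop x}) (S - {r})"
  proof (rule inj_onI)
    fix x y assume x: "x \<in> S - {r}" and y: "y \<in> S - {r}" and "{x, next_hop x} = {y, next_hop y}"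
    then show "x = y"
      using next_hop[OF x] next_hop[OF y] by (auto simp: doubleton_eq_iff)
  qed
  moreover have "(\<lambda>x. {x, next_hop x}) ` (S - {r}) \<subseteq> E"
    using next_hop unfolding adj_def by auto
  moreover have "finite E"
    using finite_complete_edges[OF \<open>finite S\<close>] E by (rule finite_subset[rotated])
  ultimately have "card (S - {r}) \<le> card E"
    by (rule card_inj_on_le)
  then show ?thesis
    using \<open>r \<in> S\<close> \<open>finite S\<close> by simp
qed

lemma component_edge_closed: "x \<in> component E v \<Longrightarrow> {x, y} \<in> E \<Longrightarrow> y \<in> component E v"
  unfolding component_def adj_def by (auto intro: rtrancl_into_rtrancl)

lemma component_mono: "E \<subseteq> F \<Longrightarrow> component E v \<subseteq> component F v"
  unfolding component_def adj_def by (auto elim: rtrancl_mono[THEN subsetD, rotated])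

lemma component_sym: "w \<in> component E v \<Longrightarrow> v \<in> component E w"
  unfolding component_def by (simp add: rtrancl_adj_sym)

lemma component_trans: "w \<in> component E v \<Longrightarrow> u \<in> component E w \<Longrightarrow> u \<in> component E v"
  unfolding component_def by (auto intro: rtrancl_trans)

lemma spanning_tree_iff_component:
  "v \<in> S \<Longrightarrow> is_spanning_tree S T \<longleftrightarrow>
     T \<subseteq> complete_edges S \<and> card T = card S - 1 \<and> S \<subseteq> component T v"
  unfolding is_spanning_tree_def component_def adj_def[symmetric]
  by (blast intro: rtrancl_trans rtrancl_adj_sym)

lemma spanning_tree_edge_mem:
  assumes "is_spanning_tree S T" "{p, q} \<in> T"
  shows "p \<in> S" "q \<in> S" "p \<noteq> q"
  using assms unfolding is_spanning_tree_def complete_edges_def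
  by (auto simp: doubleton_eq_iff)

lemma finite_spanning_tree: "finite S \<Longrightarrow> is_spanning_tree S T \<Longrightarrow> finite T"
  unfolding is_spanning_tree_def using finite_complete_edges finite_subset by blast

lemma spanning_tree_delete_edge_separates:
  assumes "finite S" and T: "is_spanning_tree S T" and e: "{p, q} \<in> T"
  shows "q \<notin> component (T - {{p, q}}) p"
proof
  let ?T' = "T - {{p, q}}"
  assume "q \<in> component ?T' p"
  then have pq: "(p, q) \<in> (adj ?T')\<^sup>*" "(q, p) \<in> (adj ?T')\<^sup>*"
    unfolding component_def by (auto intro: rtrancl_adj_sym)
  have "(u, v) \<in> (adj ?T')\<^sup>*" if "{u, v} \<in> T" for u v
  proof (cases "{u, v} = {p, q}")
    case True
    then show ?thesis using pq by (auto simp: doubleton_eq_iff)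
  next
    case False
    then show ?thesis using that by (auto simp: adj_def)
  qed
  then have "adj T \<subseteq> (adj ?T')\<^sup>*"
    unfolding adj_def by auto
  then have "(adj T)\<^sup>* \<subseteq> (adj ?T')\<^sup>*"
    by (rule rtrancl_subset_rtrancl)
  moreover have p: "p \<in> S"
    using spanning_tree_edge_mem[OF T e] by simp
  moreover have "S \<subseteq> component T p"
    using T spanning_tree_iff_component[OF p] by simp
  ultimately have "\<And>x. x \<in> S \<Longrightarrow> (x, p) \<in> (adj ?T')\<^sup>*"
    unfolding component_def by (blast intro: rtrancl_adj_sym)
  then have "card S - 1 \<le> card ?T'"
    using T p unfolding is_spanning_tree_def
    by (intro card_edges_ge_if_connected[OF \<open>finite S\<close>]) auto
  moreover have "finite T"
    using \<open>finite S\<close> T by (rule finite_spanning_tree)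
  ultimately show False
    using T e by (auto simp: is_spanning_tree_def card_gt_0_iff)
qed

lemma spanning_tree_delete_edge_covers:
  assumes T: "is_spanning_tree S T" and e: "{p, q} \<in> T" and "x \<in> S"
  shows "x \<in> component (T - {{p, q}}) p \<or> x \<in> component (T - {{p, q}}) q"
proof -
  let ?T' = "T - {{p, q}}"
  have "p \<in> S"
    using spanning_tree_edge_mem[OF T e] by simp
  then have "(p, x) \<in> (adj T)\<^sup>*"
    using T \<open>x \<in> S\<close> unfolding is_spanning_tree_def adj_def by blast
  then show ?thesis
  proof (induction rule: rtrancl_induct)
    case base
    then show ?case
      by (simp add: component_def)
  next
    case (step y z)
    show ?case
    proof (cases "{y, z} = {p, q}")
      case True
      then have "z = p \<or> z = q"
        by (auto simp: doubleton_eq_iff)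
      then show ?thesis
        by (auto simp: component_def)
    next
      case False
      then have "{y, z} \<in> ?T'"
        using step.hyps(2) by (simp add: adj_def)
      then show ?thesis
        using step.IH by (metis component_edge_closed)
    qed
  qed
qed

lemma spanning_tree_exchange:
  assumes "finite S" and T: "is_spanning_tree S T" and e: "{p, q} \<in> T"
    and x: "x \<in> component (T - {{p, q}}) p" and y: "y \<in> S - component (T - {{p, q}}) p"
  shows "{x, y} \<notin> T - {{p, q}}" and "is_spanning_tree S (insert {x, y} (T - {{p, q}}))"
proof -
  let ?T' = "T - {{p, q}}" and ?T'' = "insert {x, y} (T - {{p, q}})"
  have sub: "T \<subseteq> complete_edges S" and card: "card T = card S - 1"
    using T by (simp_all add: is_spanning_tree_def)
  show new: "{x, y} \<notin> ?T'"
    using component_edge_closed[OF x] y by blast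
  have p: "p \<in> S"
    using spanning_tree_edge_mem[OF T e] by simp
  have "?T' \<subseteq> complete_edges S"
    using sub by blast
  then have "x \<in> S"
    using rtrancl_adj_closed[of p x ?T' S] x p unfolding component_def by simp
  with y have "{x, y} \<in> complete_edges S"
    using x unfolding complete_edges_def by blast
  then have sub'': "?T'' \<subseteq> complete_edges S"
    using sub by blast
  have "finite T"
    using \<open>finite S\<close> T by (rule finite_spanning_tree)
  then have "card ?T'' = card T"
    using e new by (metis card_Suc_Diff1 card_insert_disjoint finite_Diff)
  then have card'': "card ?T'' = card S - 1"
    using card by simp
  have mono: "component ?T' v \<subseteq> component ?T'' v" for v
    by (rule component_mono) blast
  have "y \<in> component ?T' q"
    using spanning_tree_delete_edge_covers[OF T e] y by blast
  then have "q \<in> component ?T'' y"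
    using mono[of y] by (blast dest: component_sym)
  moreover have "y \<in> component ?T'' x"
    unfolding component_def adj_def by auto
  moreover have "x \<in> component ?T'' p"
    using x mono by blast
  ultimately have q: "q \<in> component ?T'' p"
    by (blast intro: component_trans)
  have "S \<subseteq> component ?T'' p"
  proof
    fix z assume "z \<in> S"
    then consider "z \<in> component ?T' p" | "z \<in> component ?T' q"
      using spanning_tree_delete_edge_covers[OF T e] by blast
    then show "z \<in> component ?T'' p"
      using mono q by cases (blast intro: component_trans)+
  qed
  then show "is_spanning_tree S ?T''"
    using spanning_tree_iff_component[OF p] sub'' card'' by simp
qed

lemma max_spanning_tree_cut:
  fixes w :: "'a set \<Rightarrow> real"
  assumes "finite S" and T: "is_spanning_tree S T"
    and max: "\<And>T'. is_spanning_tree S T' \<Longrightarrow> (\<Sum>e\<in>T'. w e) \<le> (\<Sum>e\<in>T. w e)"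
    and e: "{p, q} \<in> T"
    and x: "x \<in> component (T - {{p, q}}) p" and y: "y \<in> S - component (T - {{p, q}}) p"
  shows "w {x, y} \<le> w {p, q}"
proof -
  let ?T' = "T - {{p, q}}"
  have "finite ?T'"
    using finite_spanning_tree[OF \<open>finite S\<close> T] by simp
  then have "w {x, y} + (\<Sum>e\<in>?T'. w e) = (\<Sum>e\<in>insert {x, y} ?T'. w e)"
    using spanning_tree_exchange(1)[OF assms(1,2,4-6)] by simp
  also have "\<dots> \<le> (\<Sum>e\<in>T. w e)"
    using spanning_tree_exchange(2)[OF assms(1,2,4-6)] by (rule max)
  also have "\<dots> = w {p, q} + (\<Sum>e\<in>?T'. w e)"
    using finite_spanning_tree[OF \<open>finite S\<close> T] e by (rule sum.remove)
  finally show ?thesis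
    by simp
qed

lemma dual_functional_exists:
  fixes N :: "'a::euclidean_space \<Rightarrow> real"
  assumes definite: "\<And>x. N x = 0 \<longleftrightarrow> x = 0"
    and homogeneous: "\<And>c x. N (c *\<^sub>R x) = \<bar>c\<bar> * N x"
    and subadditive: "\<And>x y. N (x + y) \<le> N x + N y"
  obtains u where "\<And>y. u \<bullet> y \<le> N y" and "u \<bullet> z = N z"
proof -
  have nonneg: "N y \<ge> 0" for y
    using subadditive[of y "-y"] homogeneous[of "-1" y] definite[of 0] by simp
  show thesis
  proof (cases "z = 0")
    case True
    then show thesis
      using that[of 0] nonneg definite by simp
  next
    case False
    \<comment> \<open>Separate \<open>z\<close> from the open ball \<open>{w. N w < N z}\<close>, then rescale the separating functional.\<close>
    define d where "d = N z"
    have "d > 0"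
      using False definite nonneg unfolding d_def by (metis less_eq_real_def)
    have "convex {w. N w < d}"
    proof (rule convexI)
      fix x y :: 'a and s t :: real
      assume "x \<in> {w. N w < d}" "y \<in> {w. N w < d}" "0 \<le> s" "0 \<le> t" "s + t = 1"
      moreover have "N (s *\<^sub>R x + t *\<^sub>R y) \<le> s * N x + t * N y"
        using subadditive[of "s *\<^sub>R x" "t *\<^sub>R y"] homogeneous \<open>0 \<le> s\<close> \<open>0 \<le> t\<close> by simp
      ultimately show "s *\<^sub>R x + t *\<^sub>R y \<in> {w. N w < d}"
        using convex_bound_lt[of "N x" d "N y" s t] by simp
    qed
    then have "convex ((\<lambda>w. w - z) ` {w. N w < d})"
      by (rule convex_translation_subtract)
    moreover have "0 \<notin> (\<lambda>w. w - z) ` {w. N w < d}"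
      unfolding d_def by auto
    ultimately have "\<exists>a. a \<noteq> 0 \<and> (\<forall>x \<in> (\<lambda>w. w - z) ` {w. N w < d}. 0 \<le> a \<bullet> x)"
      by (rule separating_hyperplane_set_0)
    then obtain a where "a \<noteq> 0" and a: "\<And>w. N w < d \<Longrightarrow> 0 \<le> a \<bullet> (w - z)"
      by blast
    define u where "u = - a"
    define K where "K = u \<bullet> z"
    have below: "u \<bullet> w \<le> K" if "N w < d" for w
      using a[OF that] unfolding u_def K_def by (simp add: inner_diff_right)
    have sphere: "u \<bullet> w \<le> K" if "N w = d" for w
    proof (rule field_le_mult_one_interval)
      fix t :: real assume "0 < t" "t < 1"
      then have "N (t *\<^sub>R w) < d"
        using homogeneous \<open>d > 0\<close> that by simp
      then show "t * (u \<bullet> w) \<le> K"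
        using below by fastforce
    qed
    have scaled: "d * (u \<bullet> y) \<le> K * N y" for y
    proof (cases "y = 0")
      case False
      then have "N y > 0"
        using definite nonneg by (metis less_eq_real_def)
      then have "N ((d / N y) *\<^sub>R y) = d"
        using homogeneous \<open>d > 0\<close> by simp
      then have "(d / N y) * (u \<bullet> y) \<le> K"
        using sphere by fastforce
      then show ?thesis
        using \<open>N y > 0\<close> by (simp add: field_simps)
    qed (use definite[of 0] in simp)
    have "u \<noteq> 0"
      using \<open>a \<noteq> 0\<close> unfolding u_def by simp
    then have "0 < d * (u \<bullet> u)"
      using \<open>d > 0\<close> by simp
    also have "\<dots> \<le> K * N u"
      by (rule scaled)
    finally have "K > 0"
      using nonneg[of u] by (simp add: zero_less_mult_iff)
    show thesis
    proof (rule that[of "(d / K) *\<^sub>R u"])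
      show "(d / K) *\<^sub>R u \<bullet> y \<le> N y" for y
        using scaled[of y] \<open>K > 0\<close> by (simp add: field_simps)
      show "(d / K) *\<^sub>R u \<bullet> z = N z"
        using \<open>K > 0\<close> unfolding K_def d_def by simp
    qed
  qed
qed

lemma interior_convex_hull_exceeds:
  fixes x u :: "'a::euclidean_space"
  assumes x: "x \<in> interior (convex hull S)" and "u \<noteq> 0"
  obtains s where "s \<in> S" and "u \<bullet> x < u \<bullet> s"
proof -
  have "\<not> S \<subseteq> {w. u \<bullet> w \<le> u \<bullet> x}"
  proof
    assume "S \<subseteq> {w. u \<bullet> w \<le> u \<bullet> x}"
    then have "convex hull S \<subseteq> {w. u \<bullet> w \<le> u \<bullet> x}"
      by (rule hull_minimal) (rule convex_halfspace_le)
    then have "interior (convex hull S) \<subseteq> {w. u \<bullet> w < u \<bullet> x}"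
      using interior_mono interior_halfspace_le[OF \<open>u \<noteq> 0\<close>] by blast
    then show False
      using x by auto
  qed
  then obtain s where "s \<in> S" "\<not> u \<bullet> s \<le> u \<bullet> x"
    by blast
  then show thesis
    using that by simp
qed

lemma frontier_convex_hull_if_not_interior:
  "x \<in> S \<Longrightarrow> x \<notin> interior (convex hull S) \<Longrightarrow> x \<in> frontier (convex hull S)"
  using hull_subset[of S convex] closure_subset[of "convex hull S"] unfolding frontier_def by blast

lemma cut_has_wide_crossing_pair:
  fixes f :: "'a \<Rightarrow> real"
  assumes "p \<in> A" "q \<in> S - A" "a \<in> S" "b \<in> S" "f a < f q" "f p < f b"
  obtains x y where "x \<in> A" "y \<in> S - A" "f p - f q < \<bar>f x - f y\<bar>"
proof (cases "b \<in> A")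
  case True
  then show thesis
    using that[of b q] assms by simp
next
  case False
  show thesis
  proof (cases "a \<in> A")
    case True
    then show thesis
      using that[of a b] \<open>b \<notin> A\<close> assms by simp
  next
    case False
    then show thesis
      using that[of p a] assms by simp
  qed
qed

lemma heaviest_cut_edge_not_interior:
  fixes N :: "'a::euclidean_space \<Rightarrow> real"
  assumes definite: "\<And>x. N x = 0 \<longleftrightarrow> x = 0"
    and homogeneous: "\<And>c x. N (c *\<^sub>R x) = \<bar>c\<bar> * N x"
    and subadditive: "\<And>x y. N (x + y) \<le> N x + N y"
    and "p \<in> A" "q \<in> S - A"
    and cut: "\<And>x y. x \<in> A \<Longrightarrow> y \<in> S - A \<Longrightarrow> N (x - y) \<le> N (p - q)"
  shows "p \<notin> interior (convex hull S) \<or> q \<notin> interior (convex hull S)"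
proof (rule ccontr)
  assume "\<not> ?thesis"
  then have interior: "p \<in> interior (convex hull S)" "q \<in> interior (convex hull S)"
    by auto
  obtain u where u: "\<And>y. u \<bullet> y \<le> N y" and u_pq: "u \<bullet> (p - q) = N (p - q)"
    using dual_functional_exists[OF definite homogeneous subadditive] by metis
  moreover have "p \<noteq> q"
    using \<open>p \<in> A\<close> \<open>q \<in> S - A\<close> by blast
  ultimately have "u \<noteq> 0"
    using definite by auto
  then obtain b a where "b \<in> S" "u \<bullet> p < u \<bullet> b" and "a \<in> S" "u \<bullet> a < u \<bullet> q"
    using interior interior_convex_hull_exceeds[of _ S u] interior_convex_hull_exceeds[of _ S "- u"]
    by (metis inner_minus_left neg_equal_0_iff_equal neg_less_iff_less)
  then obtain x y where "x \<in> A" "y \<in> S - A" "u \<bullet> p - u \<bullet> q < \<bar>u \<bullet> x - u \<bullet> y\<bar>"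
    using cut_has_wide_crossing_pair[OF \<open>p \<in> A\<close> \<open>q \<in> S - A\<close>, where f = "(\<bullet>) u"] by blast
  moreover have "\<bar>u \<bullet> x - u \<bullet> y\<bar> \<le> N (x - y)"
    using u[of "x - y"] u[of "y - x"] homogeneous[of "-1" "x - y"] by (simp add: inner_diff_right)
  ultimately show False
    using cut u_pq by (fastforce simp: inner_diff_right)
qed

lemma is_normD:
  assumes "is_norm N"
  shows "\<And>x. N x = 0 \<longleftrightarrow> x = 0" "\<And>c x. N (c *\<^sub>R x) = \<bar>c\<bar> * N x"
    "\<And>x y. N (x + y) \<le> N x + N y"
  using assms unfolding is_norm_def by auto

lemma is_norm_minus_commute: "is_norm N \<Longrightarrow> N (x - y) = N (y - x)"
  using is_normD(2)[of N "-1" "y - x"] by simp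

lemma edge_weight_doubleton: "is_norm N \<Longrightarrow> edge_weight N {a, b} = N (a - b)"
  unfolding edge_weight_def
  by (rule the_equality) (auto simp: doubleton_eq_iff is_norm_minus_commute)

lemma max_spanning_tree_edge_cut:
  assumes "is_norm N" "finite S" "is_max_spanning_tree N S T" "{p, q} \<in> T"
  obtains A where "p \<in> A" "q \<in> S - A" "\<And>x y. x \<in> A \<Longrightarrow> y \<in> S - A \<Longrightarrow> N (x - y) \<le> N (p - q)"
proof -
  have T: "is_spanning_tree S T"
    and max: "\<And>T'. is_spanning_tree S T' \<Longrightarrow> (\<Sum>e\<in>T'. edge_weight N e) \<le> (\<Sum>e\<in>T. edge_weight N e)"
    using assms(3) unfolding is_max_spanning_tree_def by auto
  show thesis
  proof (rule that[of "component (T - {{p, q}}) p"])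
    show "p \<in> component (T - {{p, q}}) p"
      by (simp add: component_def)
    show "q \<in> S - component (T - {{p, q}}) p"
      using spanning_tree_delete_edge_separates[OF assms(2) T assms(4)]
        spanning_tree_edge_mem[OF T assms(4)] by blast
    show "N (x - y) \<le> N (p - q)"
      if "x \<in> component (T - {{p, q}}) p" "y \<in> S - component (T - {{p, q}}) p" for x y
      using max_spanning_tree_cut[OF assms(2) T max assms(4) that]
      by (simp add: edge_weight_doubleton[OF assms(1)])
  qed
qed

theorem lemma3p5:
  fixes N :: "real^2 \<Rightarrow> real" and S :: "(real^2) set"
    and T :: "(real^2) set set" and e :: "(real^2) set"
  assumes "is_norm N"
    and "finite S"
    and "\<And>p q r s. p \<in> S \<Longrightarrow> q \<in> S \<Longrightarrow> r \<in> S \<Longrightarrow> s \<in> S \<Longrightarrow>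
           p \<noteq> q \<Longrightarrow> r \<noteq> s \<Longrightarrow> {p, q} \<noteq> {r, s} \<Longrightarrow> N (p - q) \<noteq> N (r - s)"
    and "is_max_spanning_tree N S T"
    and "e \<in> T"
  shows "\<exists>x\<in>e. x \<in> frontier (convex hull S)"
proof -
  have T: "is_spanning_tree S T"
    using assms(4) unfolding is_max_spanning_tree_def by simp
  obtain p q where e: "e = {p, q}"
    using assms(5) T unfolding is_spanning_tree_def complete_edges_def by blast
  note edge = assms(5)[unfolded e]
  obtain A where "p \<in> A" "q \<in> S - A" "\<And>x y. x \<in> A \<Longrightarrow> y \<in> S - A \<Longrightarrow> N (x - y) \<le> N (p - q)"
    using max_spanning_tree_edge_cut[OF assms(1,2,4) edge] by metis
  then have "p \<notin> interior (convex hull S) \<or> q \<notin> interior (convex hull S)"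
    by (rule heaviest_cut_edge_not_interior[OF is_normD[OF assms(1)]])
  moreover have "p \<in> S" "q \<in> S"
    using spanning_tree_edge_mem[OF T edge] by simp_all
  ultimately show ?thesis
    using frontier_convex_hull_if_not_interior unfolding e by blast
qed

end
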